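(* In the setting below, for every face $F$ of $\mathcal{P}_\lambda$, $\phi(F)$ is a face of the ladder diagram $\Gamma_{\mathbf{k}}$, i.e. $\phi(F)\in\mathcal{F}(\Gamma_{\mathbf{k}})$.
   Context: Let $\mathbf{k}=(k_1,\dots,k_s)$ be positive integers with sum $n$, $n_0=0$, $n_i=\sum_{j\le i}k_j$, and $\lambda=(\lambda_1,\dots,\lambda_n)$ real with $\lambda_1=\cdots=\lambda_{n_1}>\lambda_{n_1+1}=\cdots=\lambda_{n_2}>\cdots>\lambda_{n_{s-1}+1}=\cdots=\lambda_n$. Let $I=\{(i,j)\in\mathbb{Z}^2:i,j\ge1,i+j\le n\}$; $\mathcal{P}_\lambda=\{x=(x_{i,j})_{(i,j)\in I}: x_{i,j+1}\ge x_{i,j}\ge x_{i+1,j}\ \forall (i,j)\in I\}$ with $x_{i,n+1-i}:=\lambda_i$. $Q^+$ is the directed graph on $\mathbb{Z}_{\ge0}^2$ with edges $((i,j),(i,j+1))$, $((i,j),(i+1,j))$. Terminal vertices $T_{\mathbf{k}}=\{(n_\ell,n-n_\ell):0\le\ell\le s\}$; $\Gamma_{\mathbf{k}}$ is the induced subgraph of $Q^+$ on $\{(a,b):a\le c,b\le d\text{ for some }(c,d)\in T_{\mathbf{k}}\}$. A positive path is a shortest directed path in $\Gamma_{\mathbf{k}}$ from $(0,0)$ to a terminal vertex. A face of $\Gamma_{\mathbf{k}}$ is a subgraph containing all terminal vertices that is a union of positive paths; $\mathcal{F}(\Gamma_{\mathbf{k}})$ is the set of faces. For a face $F$ of $\mathcal{P}_\lambda$,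 $\phi(F)$ is the subgraph of $Q^+$ whose edges are: all $((0,i),(0,i+1))$ and $((i,0),(i+1,0))$, $0\le i\le n-1$; $((i-1,j),(i,j))$ for $(i,j)\in I$ whenever some $x\in F$ has $x_{i,j}<x_{i,j+1}$; $((i,j-1),(i,j))$ for $(i,j)\in I$ whenever some $x\in F$ has $x_{i,j}>x_{i+1,j}$; its vertices are the endpoints of these edges. *)

theory Defs
  imports "HOL-Analysis.Analysis" "HOL-Library.Function_Algebras"
begin

(* Pointwise real vector space structure on functions, so that the library notion
   face_of applies to subsets of (nat \<times> nat \<Rightarrow> real). *)
instantiation "fun" :: (type, real_vector) real_vector
begin
definition scaleR_fun :: "real \<Rightarrow> ('a \<Rightarrow> 'b) \<Rightarrow> 'a \<Rightarrow> 'b" where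
  "scaleR_fun r f = (\<lambda>x. r *\<^sub>R f x)"
instance by standard (simp_all add: scaleR_fun_def fun_eq_iff scaleR_add_right scaleR_add_left)
end

type_synonym vert = "nat \<times> nat"
type_synonym graph = "vert set \<times> (vert \<times> vert) set"

definition nsum :: "nat list \<Rightarrow> nat \<Rightarrow> nat" where
  "nsum k l = sum_list (take l k)"

definition Iset :: "nat \<Rightarrow> vert set" where
  "Iset n = {(i,j). 1 \<le> i \<and> 1 \<le> j \<and> i + j \<le> n}"

(* x extended by the convention x_{i,n+1-i} := lambda_i *)
definition xext :: "nat \<Rightarrow> (nat \<Rightarrow> real) \<Rightarrow> (vert \<Rightarrow> real) \<Rightarrow> vert \<Rightarrow> real" where
  "xext n lam x p = (if fst p + snd p = n + 1 then lam (fst p) else x p)"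

(* Gelfand-Cetlin polytope P_lambda; points are functions on I (zero outside I) *)
definition GC :: "nat \<Rightarrow> (nat \<Rightarrow> real) \<Rightarrow> (vert \<Rightarrow> real) set" where
  "GC n lam = {x. (\<forall>p. p \<notin> Iset n \<longrightarrow> x p = 0) \<and>
     (\<forall>i j. (i,j) \<in> Iset n \<longrightarrow>
        xext n lam x (i,j) \<le> xext n lam x (i, j+1) \<and> xext n lam x (i+1, j) \<le> xext n lam x (i,j))}"

definition Qedge :: "vert \<Rightarrow> vert \<Rightarrow> bool" where
  "Qedge u v \<longleftrightarrow> v = (fst u, snd u + 1) \<or> v = (fst u + 1, snd u)"

definition terminals :: "nat list \<Rightarrow> vert set" where
  "terminals k = {(nsum k l, sum_list k - nsum k l) | l. l \<le> length k}"

definition GammaV :: "nat list \<Rightarrow> vert set" where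
  "GammaV k = {(a,b). \<exists>c d. (c,d) \<in> terminals k \<and> a \<le> c \<and> b \<le> d}"

definition GammaE :: "nat list \<Rightarrow> (vert \<times> vert) set" where
  "GammaE k = {(u,v). u \<in> GammaV k \<and> v \<in> GammaV k \<and> Qedge u v}"

definition is_dpath :: "nat list \<Rightarrow> vert list \<Rightarrow> bool" where
  "is_dpath k p \<longleftrightarrow> p \<noteq> [] \<and> set p \<subseteq> GammaV k \<and>
     (\<forall>i. Suc i < length p \<longrightarrow> (p ! i, p ! Suc i) \<in> GammaE k)"

definition is_shortest_dpath :: "nat list \<Rightarrow> vert \<Rightarrow> vert \<Rightarrow> vert list \<Rightarrow> bool" where
  "is_shortest_dpath k u v p \<longleftrightarrow> is_dpath k p \<and> hd p = u \<and> last p = v \<and>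
     (\<forall>q. is_dpath k q \<and> hd q = u \<and> last q = v \<longrightarrow> length p \<le> length q)"

definition positive_path :: "nat list \<Rightarrow> vert list \<Rightarrow> bool" where
  "positive_path k p \<longleftrightarrow> (\<exists>t \<in> terminals k. is_shortest_dpath k (0,0) t p)"

definition path_edges :: "vert list \<Rightarrow> (vert \<times> vert) set" where
  "path_edges p = {(p ! i, p ! Suc i) | i. Suc i < length p}"

definition ladder_faces :: "nat list \<Rightarrow> graph set" where
  "ladder_faces k = {G. terminals k \<subseteq> fst G \<and>
     (\<exists>P. (\<forall>p\<in>P. positive_path k p) \<and>
          fst G = (\<Union>p\<in>P. set p) \<and> snd G = (\<Union>p\<in>P. path_edges p))}"

definition phi_edges :: "nat \<Rightarrow> (nat \<Rightarrow> real) \<Rightarrow> (vert \<Rightarrow> real) set \<Rightarrow> (vert \<times> vert) set" where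
  "phi_edges n lam F =
     {((0,i),(0,i+1)) | i. i \<le> n - 1} \<union> {((i,0),(i+1,0)) | i. i \<le> n - 1}
     \<union> {((i-1,j),(i,j)) | i j. (i,j) \<in> Iset n \<and>
            (\<exists>x\<in>F. xext n lam x (i,j) < xext n lam x (i,j+1))}
     \<union> {((i,j-1),(i,j)) | i j. (i,j) \<in> Iset n \<and>
            (\<exists>x\<in>F. xext n lam x (i,j) > xext n lam x (i+1,j))}"

definition phi :: "nat \<Rightarrow> (nat \<Rightarrow> real) \<Rightarrow> (vert \<Rightarrow> real) set \<Rightarrow> graph" where
  "phi n lam F = (fst ` phi_edges n lam F \<union> snd ` phi_edges n lam F, phi_edges n lam F)"

end

theory Submission
  imports Defs
begin

text \<open>Every edge of \<open>\<phi>(F)\<close> raises the level \<open>i + j\<close> by one, and the Gelfand-Cetlin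
  inequalities propagate strictness: an edge of \<open>\<phi>(F)\<close> starting off the origin is preceded
  by another edge of \<open>\<phi>(F)\<close>, and one ending below level \<open>n\<close> is followed by another.
  Following edges backwards and forwards therefore extends every edge to a directed path from
  \<open>(0,0)\<close> to a vertex of level \<open>n\<close>, i.e. to a terminal vertex, and every such path is shortest.
  A strict inequality at \<open>(i,j)\<close> forces \<open>\<lambda>\<close> to jump between the indices \<open>i\<close> and \<open>n+1-j\<close>,
  which puts \<open>(i,j)\<close> below a terminal vertex; conversely the jumps of \<open>\<lambda>\<close> make every terminal
  vertex an endpoint of an edge.\<close>

abbreviation level :: "vert \<Rightarrow> nat" where
  "level u \<equiv> fst u + snd u"

definition walk :: "('a \<times> 'a) set \<Rightarrow> 'a list \<Rightarrow> bool" where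
  "walk E p \<longleftrightarrow> p \<noteq> [] \<and> (\<forall>i. Suc i < length p \<longrightarrow> (p ! i, p ! Suc i) \<in> E)"

lemma walk_snoc:
  assumes "walk E p" "(last p, u) \<in> E"
  shows "walk E (p @ [u])"
  unfolding walk_def
proof (intro conjI allI impI)
  fix i assume i: "Suc i < length (p @ [u])"
  have "p \<noteq> []" using assms(1) by (simp add: walk_def)
  show "((p @ [u]) ! i, (p @ [u]) ! Suc i) \<in> E"
  proof (cases "Suc i < length p")
    case True
    then show ?thesis using assms(1) by (simp add: nth_append walk_def)
  next
    case False
    with i \<open>p \<noteq> []\<close> have "i = length p - 1" by simp
    with \<open>p \<noteq> []\<close> show ?thesis using assms(2) by (simp add: nth_append last_conv_nth)
  qed
qed simp

lemma walk_path_edges_subset: "walk E p \<Longrightarrow> path_edges p \<subseteq> E"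
  by (auto simp: path_edges_def walk_def)

lemma path_edges_append_subset: "path_edges p \<subseteq> path_edges (p @ r)"
  unfolding path_edges_def by (force simp: nth_append)

lemma last_edge_in_path_edges: "p \<noteq> [] \<Longrightarrow> (last p, u) \<in> path_edges (p @ [u])"
  unfolding path_edges_def
  by (rule CollectI, rule exI[of _ "length p - 1"]) (simp add: nth_append last_conv_nth)

lemma path_edges_in_set: "(u, v) \<in> path_edges p \<Longrightarrow> u \<in> set p \<and> v \<in> set p"
  unfolding path_edges_def by auto

lemma walk_from_source:
  fixes h :: "'a \<Rightarrow> nat"
  assumes pred: "\<And>u. u \<in> V \<Longrightarrow> u \<noteq> s \<Longrightarrow> \<exists>w\<in>V. (w, u) \<in> E \<and> h w < h u"
    and "u \<in> V"
  shows "\<exists>p. walk E p \<and> set p \<subseteq> V \<and> hd p = s \<and> last p = u"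
  using \<open>u \<in> V\<close>
proof (induction "h u" arbitrary: u rule: less_induct)
  case less
  show ?case
  proof (cases "u = s")
    case True
    then show ?thesis using less.prems by (intro exI[of _ "[u]"]) (simp add: walk_def)
  next
    case False
    then obtain w where w: "w \<in> V" "(w, u) \<in> E" "h w < h u"
      using pred less.prems by blast
    then obtain p where p: "walk E p" "set p \<subseteq> V" "hd p = s" "last p = w"
      using less.hyps by blast
    then have "p \<noteq> []" by (simp add: walk_def)
    then show ?thesis using p w less.prems by (intro exI[of _ "p @ [u]"]) (simp add: walk_snoc)
  qed
qed

lemma walk_to_sink:
  fixes h :: "'a \<Rightarrow> nat"
  assumes succ: "\<And>u. u \<in> V \<Longrightarrow> u \<notin> T \<Longrightarrow> \<exists>w\<in>V. (u, w) \<in> E \<and> h u < h w"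
    and bounded: "\<And>u. u \<in> V \<Longrightarrow> h u \<le> N"
    and "walk E p" "set p \<subseteq> V"
  shows "\<exists>r. walk E (p @ r) \<and> set (p @ r) \<subseteq> V \<and> last (p @ r) \<in> T"
  using assms(3,4)
proof (induction "N - h (last p)" arbitrary: p rule: less_induct)
  case less
  have "p \<noteq> []" using less.prems by (simp add: walk_def)
  then have last_V: "last p \<in> V" using less.prems by auto
  show ?case
  proof (cases "last p \<in> T")
    case True
    then show ?thesis using less.prems by (intro exI[of _ "[]"]) simp
  next
    case False
    then obtain w where w: "w \<in> V" "(last p, w) \<in> E" "h (last p) < h w"
      using succ last_V by blast
    have "N - h (last (p @ [w])) < N - h (last p)"
      using w bounded[OF w(1)] by simp
    moreover have "walk E (p @ [w])" using walk_snoc[OF less.prems(1) w(2)] .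
    moreover have "set (p @ [w]) \<subseteq> V" using less.prems(2) w(1) by simp
    ultimately obtain r where "walk E ((p @ [w]) @ r)" "set ((p @ [w]) @ r) \<subseteq> V"
        "last ((p @ [w]) @ r) \<in> T"
      using less.hyps by blast
    then show ?thesis by (intro exI[of _ "w # r"]) simp
  qed
qed

lemma edge_on_source_sink_walk:
  fixes h :: "vert \<Rightarrow> nat"
  assumes pred: "\<And>u. u \<in> V \<Longrightarrow> u \<noteq> s \<Longrightarrow> \<exists>w\<in>V. (w, u) \<in> E \<and> h w < h u"
    and succ: "\<And>u. u \<in> V \<Longrightarrow> u \<notin> T \<Longrightarrow> \<exists>w\<in>V. (u, w) \<in> E \<and> h u < h w"
    and bounded: "\<And>u. u \<in> V \<Longrightarrow> h u \<le> N"
    and uv: "(u, v) \<in> E" "u \<in> V" "v \<in> V"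
  shows "\<exists>q. walk E q \<and> set q \<subseteq> V \<and> hd q = s \<and> last q \<in> T \<and> (u, v) \<in> path_edges q"
proof -
  obtain p where p: "walk E p" "set p \<subseteq> V" "hd p = s" "last p = u"
    using walk_from_source[OF pred uv(2)] by blast
  have "p \<noteq> []" using p(1) by (simp add: walk_def)
  have "walk E (p @ [v])" using walk_snoc[OF p(1)] p(4) uv(1) by simp
  moreover have "set (p @ [v]) \<subseteq> V" using p(2) uv(3) by simp
  ultimately obtain r where r: "walk E ((p @ [v]) @ r)" "set ((p @ [v]) @ r) \<subseteq> V"
      "last ((p @ [v]) @ r) \<in> T"
    using walk_to_sink[OF succ bounded] by blast
  have "(u, v) \<in> path_edges ((p @ [v]) @ r)"
    using last_edge_in_path_edges[OF \<open>p \<noteq> []\<close>, of v] path_edges_append_subset[of "p @ [v]" r] p(4)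
    by auto
  moreover have "hd ((p @ [v]) @ r) = s" using p(3) \<open>p \<noteq> []\<close> by simp
  ultimately show ?thesis using r by blast
qed

lemma nsum_le_sum_list: "nsum k l \<le> sum_list k"
  unfolding nsum_def by (metis append_take_drop_id le_add1 sum_list_append)

lemma nsum_interior_bounds:
  assumes "\<forall>m\<in>set k. 0 < m" "0 < l" "l < length k"
  shows "0 < nsum k l" "nsum k l < sum_list k"
proof -
  have pos: "0 < sum_list xs" if "xs \<noteq> []" "set xs \<subseteq> set k" for xs :: "nat list"
    using that assms(1) by (cases xs) auto
  show "0 < nsum k l"
    unfolding nsum_def using assms(2,3) by (intro pos) (auto dest: in_set_takeD)
  have "0 < sum_list (drop l k)"
    using assms(3) by (intro pos) (auto dest: in_set_dropD)
  then show "nsum k l < sum_list k"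
    unfolding nsum_def by (metis append_take_drop_id sum_list_append less_add_same_cancel1)
qed

lemma GammaV_downward_closed: "(c, d) \<in> GammaV k \<Longrightarrow> a \<le> c \<Longrightarrow> b \<le> d \<Longrightarrow> (a, b) \<in> GammaV k"
  unfolding GammaV_def by (auto intro: le_trans)

lemma terminals_subset_GammaV: "terminals k \<subseteq> GammaV k"
  unfolding GammaV_def by auto

lemma top_terminal: "(0, sum_list k) \<in> terminals k"
  unfolding terminals_def by (rule CollectI, rule exI[of _ 0]) (simp add: nsum_def)

lemma right_terminal: "(sum_list k, 0) \<in> terminals k"
  unfolding terminals_def by (rule CollectI, rule exI[of _ "length k"]) (simp add: nsum_def)

lemma GammaV_fst_zero: "b \<le> sum_list k \<Longrightarrow> (0, b) \<in> GammaV k"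
  using GammaV_downward_closed terminals_subset_GammaV top_terminal by blast

lemma GammaV_snd_zero: "a \<le> sum_list k \<Longrightarrow> (a, 0) \<in> GammaV k"
  using GammaV_downward_closed terminals_subset_GammaV right_terminal by blast

lemma GammaV_level_le:
  assumes "u \<in> GammaV k"
  shows "level u \<le> sum_list k"
proof -
  obtain l where "fst u \<le> nsum k l" "snd u \<le> sum_list k - nsum k l"
    using assms unfolding GammaV_def terminals_def by auto
  then show ?thesis using nsum_le_sum_list[of k l] by linarith
qed

lemma GammaV_top_level_terminal:
  assumes "u \<in> GammaV k" "level u = sum_list k"
  shows "u \<in> terminals k"
proof -
  obtain c d where cd: "(c, d) \<in> terminals k" "fst u \<le> c" "snd u \<le> d"
    using assms(1) unfolding GammaV_def by auto
  have "c + d \<le> sum_list k"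
    using cd(1) nsum_le_sum_list unfolding terminals_def by auto
  then have "u = (c, d)" using cd assms(2) by (cases u) auto
  with cd(1) show ?thesis by simp
qed

lemma dpath_level_nth:
  assumes "is_dpath k q" "i < length q"
  shows "level (q ! i) = level (q ! 0) + i"
  using assms(2)
proof (induction i)
  case (Suc i)
  have "Qedge (q ! i) (q ! Suc i)"
    using assms(1) Suc.prems unfolding is_dpath_def GammaE_def by blast
  then show ?case using Suc by (auto simp: Qedge_def)
qed simp

lemma dpath_length:
  assumes "is_dpath k q"
  shows "level (last q) + 1 = level (hd q) + length q"
proof -
  have "q \<noteq> []" using assms unfolding is_dpath_def by blast
  then show ?thesis
    using dpath_level_nth[OF assms, of "length q - 1"] by (simp add: last_conv_nth hd_conv_nth)
qed

lemma dpath_is_shortest: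
  assumes "is_dpath k q"
  shows "is_shortest_dpath k (hd q) (last q) q"
proof -
  have "length q \<le> length q'" if "is_dpath k q'" "hd q' = hd q" "last q' = last q" for q'
    using dpath_length[OF assms] dpath_length[OF that(1)] that(2,3) by simp
  then show ?thesis using assms unfolding is_shortest_dpath_def by blast
qed

lemma GammaE_level_Suc: "(u, v) \<in> GammaE k \<Longrightarrow> level v = level u + 1"
  unfolding GammaE_def Qedge_def by auto

lemma GammaV_nonterminal_level_less:
  "u \<in> GammaV k \<Longrightarrow> u \<notin> terminals k \<Longrightarrow> level u < sum_list k"
  using GammaV_level_le GammaV_top_level_terminal le_neq_implies_less by blast

lemma edge_on_positive_path:
  fixes E :: "(vert \<times> vert) set"
  defines "V \<equiv> fst ` E \<union> snd ` E"
  assumes E_sub: "E \<subseteq> GammaE k"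
    and incoming: "\<And>u v. (u, v) \<in> E \<Longrightarrow> u \<noteq> (0, 0) \<Longrightarrow> \<exists>w. (w, u) \<in> E"
    and outgoing: "\<And>u v. (u, v) \<in> E \<Longrightarrow> level v < sum_list k \<Longrightarrow> \<exists>w. (v, w) \<in> E"
    and uv: "(u, v) \<in> E"
  shows "\<exists>q. positive_path k q \<and> set q \<subseteq> V \<and> path_edges q \<subseteq> E \<and> (u, v) \<in> path_edges q"
proof -
  have V_sub: "V \<subseteq> GammaV k" using E_sub unfolding V_def GammaE_def by force
  have step: "level b = level a + 1" if "(a, b) \<in> E" for a b
    using GammaE_level_Suc E_sub that by blast
  have pred: "\<exists>w\<in>V. (w, a) \<in> E \<and> level w < level a" if a: "a \<in> V" "a \<noteq> (0, 0)" for a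
  proof -
    obtain w where w: "(w, a) \<in> E"
    proof (cases "a \<in> snd ` E")
      case False
      with a(1) obtain b where "(a, b) \<in> E" unfolding V_def by force
      then show ?thesis using incoming a(2) that by blast
    qed (use that in force)
    then show ?thesis using step[OF w] unfolding V_def by force
  qed
  have succ: "\<exists>w\<in>V. (a, w) \<in> E \<and> level a < level w" if a: "a \<in> V" "a \<notin> terminals k" for a
  proof -
    have "level a < sum_list k" using a V_sub GammaV_nonterminal_level_less by blast
    obtain w where w: "(a, w) \<in> E"
    proof (cases "a \<in> fst ` E")
      case False
      with a(1) obtain b where "(b, a) \<in> E" unfolding V_def by force
      then show ?thesis using outgoing \<open>level a < sum_list k\<close> that by blast
    qed (use that in force)
    then show ?thesis using step[OF w] unfolding V_def by force
  qed
  have bounded: "level a \<le> sum_list k" if "a \<in> V" for a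
    using that V_sub GammaV_level_le by blast
  have "u \<in> V" "v \<in> V" using uv unfolding V_def by force+
  then obtain q where q: "walk E q" "set q \<subseteq> V" "hd q = (0, 0)" "last q \<in> terminals k"
      "(u, v) \<in> path_edges q"
    using edge_on_source_sink_walk[OF pred succ bounded] uv by blast
  have "is_dpath k q"
    using q(1,2) V_sub E_sub unfolding is_dpath_def walk_def by blast
  then have "positive_path k q"
    unfolding positive_path_def using dpath_is_shortest q(3,4) by metis
  with q show ?thesis using walk_path_edges_subset by blast
qed

lemma ladder_faces_intro:
  fixes E :: "(vert \<times> vert) set"
  defines "V \<equiv> fst ` E \<union> snd ` E"
  assumes E_sub: "E \<subseteq> GammaE k"
    and terminals_sub: "terminals k \<subseteq> V"
    and incoming: "\<And>u v. (u, v) \<in> E \<Longrightarrow> u \<noteq> (0, 0) \<Longrightarrow> \<exists>w. (w, u) \<in> E"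
    and outgoing: "\<And>u v. (u, v) \<in> E \<Longrightarrow> level v < sum_list k \<Longrightarrow> \<exists>w. (v, w) \<in> E"
  shows "(V, E) \<in> ladder_faces k"
proof -
  define P where "P = {q. positive_path k q \<and> set q \<subseteq> V \<and> path_edges q \<subseteq> E}"
  have edge_on_P: "\<exists>q\<in>P. e \<in> path_edges q" if "e \<in> E" for e
    using edge_on_positive_path[OF E_sub incoming outgoing, where u = "fst e" and v = "snd e"] that
    unfolding P_def V_def by auto
  have "V \<subseteq> (\<Union>p\<in>P. set p)"
  proof
    fix v assume "v \<in> V"
    then obtain e where e: "e \<in> E" "v = fst e \<or> v = snd e" unfolding V_def by blast
    then obtain q where "q \<in> P" "e \<in> path_edges q" using edge_on_P by blast
    with e(2) show "v \<in> (\<Union>p\<in>P. set p)"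
      using path_edges_in_set[of "fst e" "snd e" q] by auto
  qed
  then have V_eq: "V = (\<Union>p\<in>P. set p)" unfolding P_def by blast
  have E_eq: "E = (\<Union>p\<in>P. path_edges p)"
    using edge_on_P unfolding P_def by blast
  show ?thesis
    unfolding ladder_faces_def
  proof (intro CollectI conjI exI[of _ P])
    show "terminals k \<subseteq> fst (V, E)" using terminals_sub by simp
    show "\<forall>p\<in>P. positive_path k p" unfolding P_def by blast
    show "fst (V, E) = (\<Union>p\<in>P. set p)" using V_eq by simp
    show "snd (V, E) = (\<Union>p\<in>P. path_edges p)" using E_eq by simp
  qed
qed

lemma GC_snd_step:
  "x \<in> GC n lam \<Longrightarrow> (i, j) \<in> Iset n \<Longrightarrow> xext n lam x (i, j) \<le> xext n lam x (i, j + 1)"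
  unfolding GC_def by blast

lemma GC_fst_step:
  "x \<in> GC n lam \<Longrightarrow> (i, j) \<in> Iset n \<Longrightarrow> xext n lam x (i + 1, j) \<le> xext n lam x (i, j)"
  unfolding GC_def by blast

lemma GC_mono_snd:
  assumes "x \<in> GC n lam" "1 \<le> i" "1 \<le> j" "i + j + d \<le> n + 1"
  shows "xext n lam x (i, j) \<le> xext n lam x (i, j + d)"
  using assms(4)
proof (induction d)
  case (Suc d)
  have "(i, j + d) \<in> Iset n" using Suc.prems assms(2,3) by (auto simp: Iset_def)
  with Suc show ?case using GC_snd_step[OF assms(1)] by fastforce
qed simp

lemma GC_antimono_fst:
  assumes "x \<in> GC n lam" "1 \<le> i" "1 \<le> j" "i + d + j \<le> n + 1"
  shows "xext n lam x (i + d, j) \<le> xext n lam x (i, j)"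
  using assms(4)
proof (induction d)
  case (Suc d)
  have "(i + d, j) \<in> Iset n" using Suc.prems assms(2,3) by (auto simp: Iset_def)
  with Suc show ?case using GC_fst_step[OF assms(1)] by fastforce
qed simp

lemma eq_if_consecutive_eq:
  "(\<And>m. i \<le> m \<Longrightarrow> m < i + d \<Longrightarrow> f m = f (Suc m)) \<Longrightarrow> f i = f (i + d)"
  by (induction d) auto

text \<open>A strict inequality at \<open>(i,j)\<close> lies between \<open>\<lambda> i = x(i, n+1-i)\<close> and
  \<open>\<lambda>(n+1-j) = x(n+1-j, j)\<close>, so \<open>\<lambda>\<close> jumps at some \<open>m = nsum k l\<close> with \<open>i \<le> m \<le> n-j\<close>,
  and the terminal vertex \<open>(m, n-m)\<close> dominates \<open>(i,j)\<close>.\<close>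

lemma strict_point_in_GammaV:
  fixes k :: "nat list" and lam :: "nat \<Rightarrow> real"
  defines "n \<equiv> sum_list k"
  assumes jumps: "\<And>m. 1 \<le> m \<Longrightarrow> m < n \<Longrightarrow> lam m \<noteq> lam (Suc m) \<Longrightarrow> \<exists>l<length k. m = nsum k l"
    and x: "x \<in> GC n lam" and ij: "(i, j) \<in> Iset n"
    and strict: "xext n lam x (i, j) < xext n lam x (i, j + 1) \<or>
                 xext n lam x (i + 1, j) < xext n lam x (i, j)"
  shows "(i, j) \<in> GammaV k"
proof -
  have i: "1 \<le> i" and j: "1 \<le> j" "i + j \<le> n" using ij by (auto simp: Iset_def)
  define d where "d = n - i - j"
  have "xext n lam x (i, j + 1) \<le> xext n lam x (i, j + 1 + d)"
    using GC_mono_snd[OF x i, of "j + 1" d] j unfolding d_def by simp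
  moreover have "xext n lam x (i, j + 1 + d) = lam i"
    using j unfolding d_def xext_def by simp
  moreover have "xext n lam x (i + 1 + d, j) \<le> xext n lam x (i + 1, j)"
    using GC_antimono_fst[OF x _ j(1), of "i + 1" d] j unfolding d_def by simp
  moreover have "xext n lam x (i + 1 + d, j) = lam (i + (1 + d))"
    using j unfolding d_def xext_def by simp
  ultimately have "lam i \<noteq> lam (i + (1 + d))"
    using strict GC_snd_step[OF x ij] GC_fst_step[OF x ij] by auto
  then obtain m where m: "i \<le> m" "m < i + (1 + d)" "lam m \<noteq> lam (Suc m)"
    using eq_if_consecutive_eq[of i "1 + d" lam] by blast
  moreover have "1 \<le> m" "m < n" using m i j unfolding d_def by auto
  ultimately obtain l where l: "l < length k" "m = nsum k l"
    using jumps by blast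
  then have "(m, n - m) \<in> terminals k" unfolding terminals_def n_def by auto
  moreover have "j \<le> n - m" using m j unfolding d_def by auto
  ultimately show ?thesis unfolding GammaV_def using m(1) by auto
qed

lemma phi_edges_fst_zero: "i \<le> n - 1 \<Longrightarrow> ((0, i), (0, i + 1)) \<in> phi_edges n lam F"
  unfolding phi_edges_def by blast

lemma phi_edges_snd_zero: "i \<le> n - 1 \<Longrightarrow> ((i, 0), (i + 1, 0)) \<in> phi_edges n lam F"
  unfolding phi_edges_def by blast

lemma phi_edges_of_less_right:
  "(i, j) \<in> Iset n \<Longrightarrow> x \<in> F \<Longrightarrow> xext n lam x (i, j) < xext n lam x (i, j + 1) \<Longrightarrow>
   ((i - 1, j), (i, j)) \<in> phi_edges n lam F"
  unfolding phi_edges_def by blast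

lemma phi_edges_of_greater_below:
  "(i, j) \<in> Iset n \<Longrightarrow> x \<in> F \<Longrightarrow> xext n lam x (i + 1, j) < xext n lam x (i, j) \<Longrightarrow>
   ((i, j - 1), (i, j)) \<in> phi_edges n lam F"
  unfolding phi_edges_def by blast

lemma phi_edges_cases:
  assumes "(u, v) \<in> phi_edges n lam F"
  obtains (fst_zero) i where "i \<le> n - 1" "u = (0, i)" "v = (0, i + 1)"
    | (snd_zero) i where "i \<le> n - 1" "u = (i, 0)" "v = (i + 1, 0)"
    | (less_right) i j x where "(i, j) \<in> Iset n" "x \<in> F"
        "xext n lam x (i, j) < xext n lam x (i, j + 1)" "u = (i - 1, j)" "v = (i, j)"
    | (greater_below) i j x where "(i, j) \<in> Iset n" "x \<in> F"
        "xext n lam x (i + 1, j) < xext n lam x (i, j)" "u = (i, j - 1)" "v = (i, j)"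
  using assms unfolding phi_edges_def by blast

lemma phi_edges_Qedge: "(u, v) \<in> phi_edges n lam F \<Longrightarrow> Qedge u v"
  by (erule phi_edges_cases) (auto simp: Qedge_def Iset_def)

lemma phi_edges_subset_GammaE:
  fixes k :: "nat list" and lam :: "nat \<Rightarrow> real"
  defines "n \<equiv> sum_list k"
  assumes FG: "F \<subseteq> GC n lam" and n_pos: "0 < n"
    and jumps: "\<And>m. 1 \<le> m \<Longrightarrow> m < n \<Longrightarrow> lam m \<noteq> lam (Suc m) \<Longrightarrow> \<exists>l<length k. m = nsum k l"
  shows "phi_edges n lam F \<subseteq> GammaE k"
proof (clarify)
  fix u v assume uv: "(u, v) \<in> phi_edges n lam F"
  have v: "v \<in> GammaV k"
    using uv
  proof (cases rule: phi_edges_cases)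
    case (fst_zero i)
    then show ?thesis using n_pos GammaV_fst_zero[of "i + 1" k] unfolding n_def by simp
  next
    case (snd_zero i)
    then show ?thesis using n_pos GammaV_snd_zero[of "i + 1" k] unfolding n_def by simp
  next
    case (less_right i j x)
    then show ?thesis using strict_point_in_GammaV[OF jumps[unfolded n_def]] FG unfolding n_def by blast
  next
    case (greater_below i j x)
    then show ?thesis using strict_point_in_GammaV[OF jumps[unfolded n_def]] FG unfolding n_def by blast
  qed
  have "Qedge u v" using phi_edges_Qedge[OF uv] .
  then have "u \<in> GammaV k" using GammaV_downward_closed[of "fst v" "snd v" k "fst u" "snd u"] v
    unfolding Qedge_def by auto
  with v \<open>Qedge u v\<close> show "(u, v) \<in> GammaE k" unfolding GammaE_def by blast
qed

text \<open>If \<open>x(i-1,j) > x(i,j)\<close> fails, then \<open>x(i-1,j) = x(i,j) < x(i,j+1) \<le> x(i-1,j+1)\<close>; the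
  other three propagation lemmas follow the same pattern.\<close>

lemma phi_edges_incoming_of_less_right:
  assumes x: "x \<in> F" and FG: "F \<subseteq> GC n lam" and ij: "(i, j) \<in> Iset n"
    and lt: "xext n lam x (i, j) < xext n lam x (i, j + 1)"
  shows "\<exists>w. (w, (i - 1, j)) \<in> phi_edges n lam F"
proof (cases "i = 1")
  case True
  then have "j - 1 \<le> n - 1" "j - 1 + 1 = j" using ij by (auto simp: Iset_def)
  then show ?thesis using True phi_edges_fst_zero[of "j - 1" n lam F] by force
next
  case False
  then obtain i' where i': "i = Suc i'" "(i', j) \<in> Iset n" "(i', j + 1) \<in> Iset n"
    using ij by (cases i) (auto simp: Iset_def)
  show ?thesis
  proof (cases "xext n lam x (i' + 1, j) < xext n lam x (i', j)")
    case True
    then show ?thesis using phi_edges_of_greater_below[OF i'(2) x] i'(1) by auto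
  next
    case False
    then have "xext n lam x (i', j) < xext n lam x (i', j + 1)"
      using lt GC_fst_step[OF _ i'(3), of x lam] x FG i'(1) by auto
    then show ?thesis using phi_edges_of_less_right[OF i'(2) x] i'(1) by auto
  qed
qed

lemma phi_edges_incoming_of_greater_below:
  assumes x: "x \<in> F" and FG: "F \<subseteq> GC n lam" and ij: "(i, j) \<in> Iset n"
    and gt: "xext n lam x (i + 1, j) < xext n lam x (i, j)"
  shows "\<exists>w. (w, (i, j - 1)) \<in> phi_edges n lam F"
proof (cases "j = 1")
  case True
  then have "i - 1 \<le> n - 1" "i - 1 + 1 = i" using ij by (auto simp: Iset_def)
  then show ?thesis using True phi_edges_snd_zero[of "i - 1" n lam F] by force
next
  case False
  then obtain j' where j': "j = Suc j'" "(i, j') \<in> Iset n" "(i + 1, j') \<in> Iset n"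
    using ij by (cases j) (auto simp: Iset_def)
  show ?thesis
  proof (cases "xext n lam x (i, j') < xext n lam x (i, j' + 1)")
    case True
    then show ?thesis using phi_edges_of_less_right[OF j'(2) x] j'(1) by auto
  next
    case False
    then have "xext n lam x (i + 1, j') < xext n lam x (i, j')"
      using gt GC_snd_step[OF _ j'(3), of x lam] x FG j'(1) by auto
    then show ?thesis using phi_edges_of_greater_below[OF j'(2) x] j'(1) by auto
  qed
qed

lemma phi_edges_incoming:
  assumes FG: "F \<subseteq> GC n lam" and uv: "(u, v) \<in> phi_edges n lam F" and u0: "u \<noteq> (0, 0)"
  shows "\<exists>w. (w, u) \<in> phi_edges n lam F"
  using uv
proof (cases rule: phi_edges_cases)
  case (fst_zero i)
  then have "i - 1 \<le> n - 1" "i - 1 + 1 = i" using u0 by auto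
  then show ?thesis using fst_zero phi_edges_fst_zero[of "i - 1" n lam F] by metis
next
  case (snd_zero i)
  then have "i - 1 \<le> n - 1" "i - 1 + 1 = i" using u0 by auto
  then show ?thesis using snd_zero phi_edges_snd_zero[of "i - 1" n lam F] by metis
next
  case (less_right i j x)
  then show ?thesis using phi_edges_incoming_of_less_right[OF _ FG] by blast
next
  case (greater_below i j x)
  then show ?thesis using phi_edges_incoming_of_greater_below[OF _ FG] by blast
qed

lemma phi_edges_outgoing_of_less_right:
  assumes x: "x \<in> F" and FG: "F \<subseteq> GC n lam" and ij: "(i, j) \<in> Iset n" and below: "i + j < n"
    and lt: "xext n lam x (i, j) < xext n lam x (i, j + 1)"
  shows "\<exists>v. ((i, j), v) \<in> phi_edges n lam F"
proof -
  have I: "(i + 1, j) \<in> Iset n" "(i, j + 1) \<in> Iset n" using ij below by (auto simp: Iset_def)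
  show ?thesis
  proof (cases "xext n lam x (i + 1, j + 1) < xext n lam x (i, j + 1)")
    case True
    then show ?thesis using phi_edges_of_greater_below[OF I(2) x] by auto
  next
    case False
    then have "xext n lam x (i + 1, j) < xext n lam x (i + 1, j + 1)"
      using lt GC_fst_step[OF _ ij, of x lam] x FG by auto
    then show ?thesis using phi_edges_of_less_right[OF I(1) x] by auto
  qed
qed

lemma phi_edges_outgoing_of_greater_below:
  assumes x: "x \<in> F" and FG: "F \<subseteq> GC n lam" and ij: "(i, j) \<in> Iset n" and below: "i + j < n"
    and gt: "xext n lam x (i + 1, j) < xext n lam x (i, j)"
  shows "\<exists>v. ((i, j), v) \<in> phi_edges n lam F"
proof -
  have I: "(i + 1, j) \<in> Iset n" "(i, j + 1) \<in> Iset n" using ij below by (auto simp: Iset_def)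
  show ?thesis
  proof (cases "xext n lam x (i + 1, j) < xext n lam x (i + 1, j + 1)")
    case True
    then show ?thesis using phi_edges_of_less_right[OF I(1) x] by auto
  next
    case False
    then have "xext n lam x (i + 1, j + 1) < xext n lam x (i, j + 1)"
      using gt GC_snd_step[OF _ ij, of x lam] x FG by auto
    then show ?thesis using phi_edges_of_greater_below[OF I(2) x] by auto
  qed
qed

lemma phi_edges_outgoing:
  assumes FG: "F \<subseteq> GC n lam" and wu: "(w, u) \<in> phi_edges n lam F" and below: "level u < n"
  shows "\<exists>v. (u, v) \<in> phi_edges n lam F"
  using wu
proof (cases rule: phi_edges_cases)
  case (fst_zero i)
  then have "i + 1 \<le> n - 1" using below by auto
  then show ?thesis using fst_zero phi_edges_fst_zero by blast
next
  case (snd_zero i)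
  then have "i + 1 \<le> n - 1" using below by auto
  then show ?thesis using snd_zero phi_edges_snd_zero by blast
next
  case (less_right i j x)
  then show ?thesis using phi_edges_outgoing_of_less_right[OF _ FG] below by auto
next
  case (greater_below i j x)
  then show ?thesis using phi_edges_outgoing_of_greater_below[OF _ FG] below by auto
qed

text \<open>At an interior terminal vertex \<open>(m, n-m)\<close> the neighbours \<open>x(m, n-m+1) = \<lambda> m\<close> and
  \<open>x(m+1, n-m) = \<lambda>(m+1)\<close> differ, so every point of \<open>F\<close> is strict on one side of \<open>x(m, n-m)\<close>.\<close>

lemma terminals_subset_phi_vertices:
  fixes k :: "nat list" and lam :: "nat \<Rightarrow> real"
  defines "n \<equiv> sum_list k"
  assumes k_pos: "\<forall>m\<in>set k. 0 < m" and n_pos: "0 < n" and "F \<noteq> {}"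
    and jumps: "\<And>l. 0 < l \<Longrightarrow> l < length k \<Longrightarrow> lam (Suc (nsum k l)) < lam (nsum k l)"
  shows "terminals k \<subseteq> fst ` phi_edges n lam F \<union> snd ` phi_edges n lam F"
proof
  fix t assume "t \<in> terminals k"
  then obtain l where t: "t = (nsum k l, n - nsum k l)" "l \<le> length k"
    unfolding terminals_def n_def by auto
  consider "l = 0" | "l = length k" | "0 < l" "l < length k" using t(2) by linarith
  then show "t \<in> fst ` phi_edges n lam F \<union> snd ` phi_edges n lam F"
  proof cases
    case 1
    then have "t = (0, n - 1 + 1)" using t n_pos by (simp add: nsum_def)
    then show ?thesis using phi_edges_fst_zero[of "n - 1" n lam F] by force
  next
    case 2
    then have "t = (n - 1 + 1, 0)" using t n_pos by (simp add: nsum_def n_def)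
    then show ?thesis using phi_edges_snd_zero[of "n - 1" n lam F] by force
  next
    case 3
    define m where "m = nsum k l"
    have m: "0 < m" "m < n" using nsum_interior_bounds[OF k_pos 3] unfolding m_def n_def by auto
    obtain x where x: "x \<in> F" using \<open>F \<noteq> {}\<close> by blast
    have I: "(m, n - m) \<in> Iset n" using m unfolding Iset_def by auto
    have right: "xext n lam x (m, n - m + 1) = lam m" and below: "xext n lam x (m + 1, n - m) = lam (m + 1)"
      using m unfolding xext_def by simp_all
    have "t = (m, n - m)" using t unfolding m_def by simp
    show ?thesis
    proof (cases "xext n lam x (m, n - m) < xext n lam x (m, n - m + 1)")
      case True
      then show ?thesis using phi_edges_of_less_right[OF I x] \<open>t = (m, n - m)\<close> by force
    next
      case False
      then have "xext n lam x (m + 1, n - m) < xext n lam x (m, n - m)"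
        using right below jumps[OF 3] unfolding m_def by simp
      then show ?thesis using phi_edges_of_greater_below[OF I x] \<open>t = (m, n - m)\<close> by force
    qed
  qed
qed

theorem corollary2p4:
  fixes k :: "nat list" and lam :: "nat \<Rightarrow> real" and F :: "(nat \<times> nat \<Rightarrow> real) set"
  assumes k_ne: "k \<noteq> []"
    and k_pos: "\<forall>m \<in> set k. 0 < m"
    and lam_blocks: "\<forall>i. 1 \<le> i \<and> i < sum_list k \<longrightarrow>
           (if i \<in> {nsum k l | l. 1 \<le> l \<and> l < length k}
            then lam i > lam (Suc i) else lam i = lam (Suc i))"
    and F_face: "F face_of GC (sum_list k) lam"
    and F_ne: "F \<noteq> {}"
  shows "phi (sum_list k) lam F \<in> ladder_faces k"
proof -
  have FG: "F \<subseteq> GC (sum_list k) lam" using face_of_imp_subset[OF F_face] .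
  have n_pos: "0 < sum_list k" using k_ne k_pos by (cases k) auto
  have jumps_only_at_nsum: "\<exists>l<length k. m = nsum k l"
    if "1 \<le> m" "m < sum_list k" "lam m \<noteq> lam (Suc m)" for m
    using lam_blocks that by (auto split: if_splits)
  have jumps_at_nsum: "lam (Suc (nsum k l)) < lam (nsum k l)" if "0 < l" "l < length k" for l
  proof -
    have "nsum k l \<in> {nsum k l | l. 1 \<le> l \<and> l < length k}" using that by auto
    then show ?thesis
      using lam_blocks[rule_format, of "nsum k l"] nsum_interior_bounds[OF k_pos that] by simp
  qed
  show ?thesis
    unfolding phi_def
  proof (rule ladder_faces_intro)
    show "phi_edges (sum_list k) lam F \<subseteq> GammaE k"
      using phi_edges_subset_GammaE[OF FG n_pos] jumps_only_at_nsum by blast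
    show "terminals k \<subseteq> fst ` phi_edges (sum_list k) lam F \<union> snd ` phi_edges (sum_list k) lam F"
      using terminals_subset_phi_vertices[OF k_pos n_pos F_ne] jumps_at_nsum by blast
    show "\<exists>w. (w, u) \<in> phi_edges (sum_list k) lam F"
      if "(u, v) \<in> phi_edges (sum_list k) lam F" "u \<noteq> (0, 0)" for u v
      using phi_edges_incoming[OF FG that] .
    show "\<exists>w. (v, w) \<in> phi_edges (sum_list k) lam F"
      if "(u, v) \<in> phi_edges (sum_list k) lam F" "level v < sum_list k" for u v
      using phi_edges_outgoing[OF FG that] .
  qed
qed

end
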